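(* Let $\mathcal{F}\subseteq\mathcal{P}(\omega)$ be compact, hereditary and covering $\omega$. Then $\lVert\cdot\rVert^{\mathcal{F}}\colon\mathbb{R}^\omega\to[0,\infty]$ is a nice quasi-norm; in particular it is lower semicontinuous: $\lim_{n\to\infty}\lVert P_n(x)\rVert^{\mathcal{F}}=\lVert x\rVert^{\mathcal{F}}$ for every $x\in\mathbb{R}^\omega$ (allowing the value $\infty$).
   Context: $\omega=\{1,2,3,\dots\}$. Subsets of $\omega$ are identified with elements of $2^\omega$ (product topology); $\mathcal{F}$ is compact if compact in $2^\omega$, hereditary if closed under taking subsets, and covers $\omega$ if $\bigcup\mathcal{F}=\omega$. A partition is a family $\mathcal{P}\subseteq\mathcal{P}(\omega)$ with $\emptyset\in\mathcal{P}$, $\bigcup\mathcal{P}=\omega$, elements pairwise disjoint; $\mathbb{P}_\mathcal{F}$ is the set of partitions contained in $\mathcal{F}$. For $x\in\mathbb{R}^\omega$, $\lVert x\rVert^{\mathcal{F}}=\inf_{\mathcal{P}\in\mathbb{P}_\mathcal{F}}\sum_{F\in\mathcal{P}}\sup_{k\in F}|x(k)|\in[0,\infty]$ (with $\sup_{k\in\emptyset}=0$). For $A\subseteq\omega$, $P_A(x)$ is the sequence equal to $x(k)$ for $k\in A$ and $0$ otherwise; $P_n=P_{\{1,\dots,n\}}$. A function $\varphi\colon\mathbb{R}^\omega\to[0,\infty]$ is nice if (i) $\varphi(x)<\infty$ for all finitely supported $x$; (ii) $|x(n)|\le|y(n)|$ for all $n$ implies $\varphi(x)\le\varphi(y)$;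 (iii) $\lim_n\varphi(P_n(x))=\varphi(x)$ for every $x$. A (possibly extended) quasi-norm satisfies $\lVert x\rVert=0\iff x=0$, $\lVert\lambda x\rVert=|\lambda|\lVert x\rVert$, and $\lVert x+y\rVert\le c(\lVert x\rVert+\lVert y\rVert)$ for some constant $c\ge1$. *)

theory Defs
  imports "HOL-Analysis.Analysis"
begin

(* omega = {1,2,3,...} is represented by the type nat (index k+1 of the paper is index k here).
   Subsets of omega are nat sets; a set is identified with its characteristic function in 2^omega,
   carrying the product of discrete topologies on bool. *)

definition char_fun :: "nat set \<Rightarrow> (nat \<Rightarrow> bool)" where
  "char_fun A = (\<lambda>n. n \<in> A)"

definition cantor_top :: "(nat \<Rightarrow> bool) topology" where
  "cantor_top = product_topology (\<lambda>_. discrete_topology (UNIV :: bool set)) UNIV"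

definition compact_family :: "nat set set \<Rightarrow> bool" where
  "compact_family \<F> \<longleftrightarrow> compactin cantor_top (char_fun ` \<F>)"

definition hereditary :: "nat set set \<Rightarrow> bool" where
  "hereditary \<F> \<longleftrightarrow> (\<forall>A\<in>\<F>. \<forall>B. B \<subseteq> A \<longrightarrow> B \<in> \<F>)"

definition covers :: "nat set set \<Rightarrow> bool" where
  "covers \<F> \<longleftrightarrow> \<Union>\<F> = UNIV"

definition is_partition :: "nat set set \<Rightarrow> bool" where
  "is_partition \<P> \<longleftrightarrow> {} \<in> \<P> \<and> \<Union>\<P> = UNIV \<and>
     (\<forall>A\<in>\<P>. \<forall>B\<in>\<P>. A \<noteq> B \<longrightarrow> A \<inter> B = {})"

definition partitions_in :: "nat set set \<Rightarrow> nat set set set" where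
  "partitions_in \<F> = {\<P>. is_partition \<P> \<and> \<P> \<subseteq> \<F>}"

(* ||x||^F with values in [0,infinity] = ennreal; sup over the empty set is 0 = bot *)
definition Fnorm :: "nat set set \<Rightarrow> (nat \<Rightarrow> real) \<Rightarrow> ennreal" where
  "Fnorm \<F> x = (INF \<P>\<in>partitions_in \<F>. \<Sum>\<^sub>\<infinity>A\<in>\<P>. (SUP k\<in>A. ennreal \<bar>x k\<bar>))"

definition proj :: "nat set \<Rightarrow> (nat \<Rightarrow> real) \<Rightarrow> (nat \<Rightarrow> real)" where
  "proj A x = (\<lambda>k. if k \<in> A then x k else 0)"

definition projn :: "nat \<Rightarrow> (nat \<Rightarrow> real) \<Rightarrow> (nat \<Rightarrow> real)" where
  "projn n = proj {..<n}"

definition nice :: "((nat \<Rightarrow> real) \<Rightarrow> ennreal) \<Rightarrow> bool" where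
  "nice \<phi> \<longleftrightarrow>
     (\<forall>x. finite {k. x k \<noteq> 0} \<longrightarrow> \<phi> x < \<infinity>) \<and>
     (\<forall>x y. (\<forall>n. \<bar>x n\<bar> \<le> \<bar>y n\<bar>) \<longrightarrow> \<phi> x \<le> \<phi> y) \<and>
     (\<forall>x. (\<lambda>n. \<phi> (projn n x)) \<longlonglongrightarrow> \<phi> x)"

definition ext_quasi_norm :: "((nat \<Rightarrow> real) \<Rightarrow> ennreal) \<Rightarrow> bool" where
  "ext_quasi_norm \<phi> \<longleftrightarrow>
     (\<forall>x. \<phi> x = 0 \<longleftrightarrow> x = (\<lambda>_. 0)) \<and>
     (\<forall>(l::real) x. \<phi> (\<lambda>k. l * x k) = ennreal \<bar>l\<bar> * \<phi> x) \<and>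
     (\<exists>c::real. c \<ge> 1 \<and> (\<forall>x y. \<phi> (\<lambda>k. x k + y k) \<le> ennreal c * (\<phi> x + \<phi> y)))"

end

theory Submission
  imports Defs "HOL-Library.Diagonal_Subsequence"
begin

text \<open>
  The quasi-norm axioms are elementary; the triangle inequality holds with constant 2 because two
  partitions can be spliced along the set where \<open>|y| \<le> |x|\<close>.

  For lower semicontinuity take, for every \<open>n\<close>, a partition \<open>\<P>\<^sub>n\<close> in \<open>\<F>\<close> that is nearly
  optimal for \<open>P\<^sub>n(x)\<close>. By a diagonal argument the relations \<open>same_block \<P>\<^sub>n\<close> converge
  pointwise along a subsequence. The limit is an equivalence relation whose classes belong to \<open>\<F>\<close>,
  since their initial segments lie in blocks of the \<open>\<P>\<^sub>n\<close> and \<open>\<F>\<close> is hereditary and closed in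
  \<open>2\<^sup>\<omega>\<close>. On the first \<open>m\<close> coordinates the cost of this limit partition is bounded by that of
  some \<open>\<P>\<^sub>n\<close> with \<open>n \<ge> m\<close>, so its cost for \<open>x\<close> is at most \<open>sup\<^sub>n \<parallel>P\<^sub>n(x)\<parallel>\<^sup>\<F>\<close>.
\<close>

section \<open>Sums and infima in \<open>ennreal\<close>\<close>

text \<open>The library fact \<open>summable_on_ennreal\<close> is, through a coercion, about \<open>ennreal_of_enat \<circ> f\<close>.\<close>

lemma ennreal_summable_on [simp]: "(f :: 'a \<Rightarrow> ennreal) summable_on A"
  by (simp add: nonneg_summable_on_complete)

lemma sum_le_infsum_ennreal:
  fixes f :: "'a \<Rightarrow> ennreal"
  assumes "finite G" "G \<subseteq> A"
  shows "sum f G \<le> infsum f A"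
proof -
  have "sum f G = infsum f G"
    using assms(1) by simp
  also have "\<dots> \<le> infsum f A"
    by (rule infsum_mono_neutral) (use assms(2) in auto)
  finally show ?thesis .
qed

lemma infsum_le_ennreal:
  fixes f :: "'a \<Rightarrow> ennreal"
  assumes "\<And>G. finite G \<Longrightarrow> G \<subseteq> A \<Longrightarrow> sum f G \<le> c"
  shows "infsum f A \<le> c"
  using infsum_le_finite_sums[of f A c, OF ennreal_summable_on] assms by simp

lemma infsum_Un_le_ennreal:
  fixes f :: "'a \<Rightarrow> ennreal"
  shows "infsum f (A \<union> B) \<le> infsum f A + infsum f B"
proof -
  have "infsum f (A \<union> B) = infsum f A + infsum f (B - A)"
    using infsum_Un_disjoint[of f A "B - A", OF ennreal_summable_on ennreal_summable_on] by auto
  also have "\<dots> \<le> infsum f A + infsum f B"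
    by (intro add_left_mono infsum_mono_neutral ennreal_summable_on) auto
  finally show ?thesis .
qed

lemma infsum_image_le_ennreal:
  fixes g :: "'b \<Rightarrow> ennreal"
  shows "infsum g (h ` A) \<le> infsum (g \<circ> h) A"
proof (rule infsum_le_ennreal)
  fix G assume "finite G" "G \<subseteq> h ` A"
  then obtain K where K: "K \<subseteq> A" "finite K" "G = h ` K"
    by (meson finite_subset_image)
  then have "sum g G \<le> sum (g \<circ> h) K"
    using sum_image_le[of K g h] by (simp add: o_def)
  also have "\<dots> \<le> infsum (g \<circ> h) A"
    using K by (intro sum_le_infsum_ennreal)
  finally show "sum g G \<le> infsum (g \<circ> h) A" .
qed

lemma infsum_cmult_ennreal:
  fixes f :: "'a \<Rightarrow> ennreal"
  shows "infsum (\<lambda>a. c * f a) A = c * infsum f A"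
  by (simp add: nonneg_infsum_complete SUP_mult_left_ennreal sum_distrib_left)

lemma INF_continuous_mono_ennreal:
  fixes g :: "ennreal \<Rightarrow> ennreal"
  assumes "mono g" "\<And>y. isCont g y" "I \<noteq> {}"
  shows "g (INF i\<in>I. f i) = (INF i\<in>I. g (f i))"
  using continuous_at_Inf_mono[of g "f ` I"] assms
  by (simp add: image_comp continuous_at_imp_continuous_within)

lemma mult_INF_ennreal:
  fixes c :: ennreal
  assumes "c < top" "I \<noteq> {}"
  shows "c * (INF i\<in>I. f i) = (INF i\<in>I. c * f i)"
proof (rule INF_continuous_mono_ennreal)
  show "isCont ((*) c) y" for y
    using ennreal_tendsto_cmult[OF assms(1) tendsto_ident_at] by (simp add: isCont_def)
qed (use assms in \<open>auto simp: mono_def mult_left_mono\<close>)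

lemma add_INF_ennreal:
  fixes c :: ennreal
  assumes "I \<noteq> {}"
  shows "c + (INF i\<in>I. f i) = (INF i\<in>I. c + f i)"
  by (rule INF_continuous_mono_ennreal) (use assms in \<open>auto simp: mono_def intro!: continuous_intros\<close>)

lemma le_INF_add_ennreal:
  fixes z :: ennreal
  assumes "\<And>i j. i \<in> I \<Longrightarrow> j \<in> J \<Longrightarrow> z \<le> f i + g j" "I \<noteq> {}" "J \<noteq> {}"
  shows "z \<le> (INF i\<in>I. f i) + (INF j\<in>J. g j)"
proof -
  have "(INF i\<in>I. f i) + (INF j\<in>J. g j) = (INF j\<in>J. INF i\<in>I. f i + g j)"
    using add_INF_ennreal[OF assms(3)] add_INF_ennreal[OF assms(2), of "g _" f]
    by (simp add: add.commute)
  then show ?thesis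
    using assms(1) by (auto intro!: INF_greatest)
qed

section \<open>Diagonal subsequences\<close>

lemma bool_seq_constant_subseq:
  fixes g :: "nat \<Rightarrow> bool"
  obtains s :: "nat \<Rightarrow> nat" and b where "strict_mono s" "\<And>t. g (s t) = b"
proof -
  obtain t0 where "infinite {t. g t = g t0}"
    using pigeonhole_infinite[of UNIV g] by auto
  then show thesis
    using that[of "enumerate {t. g t = g t0}" "g t0"] strict_mono_enumerate enumerate_in_set
    by blast
qed

lemma subseq_pointwise_eventually_constant:
  fixes f :: "nat \<Rightarrow> 'a::countable \<Rightarrow> bool"
  obtains \<sigma> where "strict_mono \<sigma>" "\<And>a. \<exists>b. \<forall>\<^sub>F t in sequentially. f (\<sigma> t) a = b"
proof -
  define P where "P k s \<longleftrightarrow> (\<exists>b. \<forall>\<^sub>F t in sequentially. f (s t) (from_nat k) = b)"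
    for k and s :: "nat \<Rightarrow> nat"
  interpret subseqs P
  proof
    fix k and s :: "nat \<Rightarrow> nat"
    obtain s' :: "nat \<Rightarrow> nat" and b where "strict_mono s'" "\<And>t. f (s (s' t)) (from_nat k) = b"
      using bool_seq_constant_subseq[of "\<lambda>t. f (s t) (from_nat k)"] by metis
    then show "\<exists>s'. strict_mono s' \<and> P k (s \<circ> s')"
      unfolding P_def by auto
  qed
  have diag: "P k (diagseq \<circ> (+) (Suc k))" for k
    by (rule diagseq_holds) (auto simp: P_def intro: eventually_subseq)
  have "\<exists>b. \<forall>\<^sub>F t in sequentially. f (diagseq t) (from_nat k) = b" for k
  proof -
    obtain b where "\<forall>\<^sub>F t in sequentially. f (diagseq (t + Suc k)) (from_nat k) = b"
      using diag[of k] unfolding P_def o_def by (auto simp: add.commute)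
    then show ?thesis
      using eventually_sequentially_seg by blast
  qed
  then show thesis
    using that[OF subseq_diagseq] by (metis from_nat_to_nat)
qed

section \<open>Partitions and their cost\<close>

definition partition_norm :: "(nat \<Rightarrow> real) \<Rightarrow> nat set set \<Rightarrow> ennreal" where
  "partition_norm x P = (\<Sum>\<^sub>\<infinity>A\<in>P. SUP k\<in>A. ennreal \<bar>x k\<bar>)"

lemma Fnorm_eq_INF_partition_norm: "Fnorm F x = (INF P\<in>partitions_in F. partition_norm x P)"
  by (simp add: Fnorm_def partition_norm_def)

lemma is_partition_disjoint: "is_partition P \<Longrightarrow> A \<in> P \<Longrightarrow> B \<in> P \<Longrightarrow> A \<noteq> B \<Longrightarrow> A \<inter> B = {}"
  by (simp add: is_partition_def)

lemma is_partition_block_unique: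
  assumes "is_partition P" "A \<in> P" "B \<in> P" "i \<in> A" "i \<in> B"
  shows "A = B"
  using is_partition_disjoint[OF assms(1-3)] assms(4,5) by blast

lemma is_partition_covers:
  assumes "is_partition P"
  obtains B where "B \<in> P" "i \<in> B"
  using assms unfolding is_partition_def by blast

definition same_block :: "nat set set \<Rightarrow> nat \<Rightarrow> nat \<Rightarrow> bool" where
  "same_block P i j \<longleftrightarrow> (\<exists>B\<in>P. i \<in> B \<and> j \<in> B)"

lemma same_block_mem:
  assumes "is_partition P" "B \<in> P" "i \<in> B" "same_block P i j"
  shows "j \<in> B"
  using assms is_partition_block_unique unfolding same_block_def by blast

lemma equivp_same_block:
  assumes "is_partition P"
  shows "equivp (same_block P)"
proof (rule equivpI)
  show "reflp (same_block P)"
  proof (rule reflpI)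
    fix i
    obtain B where "B \<in> P" "i \<in> B"
      using is_partition_covers[OF assms] .
    then show "same_block P i i"
      unfolding same_block_def by blast
  qed
  show "symp (same_block P)"
    by (auto simp: symp_def same_block_def)
  show "transp (same_block P)"
  proof (rule transpI)
    fix i j k
    assume "same_block P i j" "same_block P j k"
    then obtain B where "B \<in> P" "i \<in> B" "j \<in> B" "k \<in> B"
      using same_block_mem[OF assms] unfolding same_block_def by blast
    then show "same_block P i k"
      unfolding same_block_def by blast
  qed
qed

definition partition_of :: "(nat \<Rightarrow> nat \<Rightarrow> bool) \<Rightarrow> nat set set" where
  "partition_of R = insert {} (range (\<lambda>i. {j. R i j}))"

lemma is_partition_partition_of:
  assumes "equivp R"
  shows "is_partition (partition_of R)"
proof -
  have R_eq: "R i = R j" if "R i j" for i j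
    using assms that by (simp add: equivp_def)
  have "{j. R i j} = {j. R i' j}" if overlap: "{j. R i j} \<inter> {j. R i' j} \<noteq> {}" for i i'
  proof -
    obtain k where "R i k" "R i' k"
      using overlap by blast
    then show ?thesis
      using R_eq by metis
  qed
  then show ?thesis
    unfolding is_partition_def
  proof (intro conjI ballI impI)
    show "{} \<in> partition_of R" "\<Union> (partition_of R) = UNIV"
      using equivp_reflp[OF assms] by (auto simp: partition_of_def)
  qed (auto simp: partition_of_def)
qed

lemma same_block_partition_of:
  assumes "equivp R"
  shows "same_block (partition_of R) = R"
proof (intro ext iffI)
  fix i j
  have R_eq: "R k = R l" if "R k l" for k l
    using assms that by (simp add: equivp_def)
  show "R i j" if "same_block (partition_of R) i j"
    using that R_eq unfolding same_block_def partition_of_def by auto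
  show "same_block (partition_of R) i j" if "R i j"
    using that equivp_reflp[OF assms, of i] unfolding same_block_def partition_of_def by blast
qed

lemma hereditaryD: "hereditary F \<Longrightarrow> A \<in> F \<Longrightarrow> B \<subseteq> A \<Longrightarrow> B \<in> F"
  unfolding hereditary_def by blast

lemma singletons_in_partitions_in:
  assumes "hereditary F" "covers F"
  shows "partition_of (=) \<in> partitions_in F"
proof -
  have singleton: "{k} \<in> F" for k
  proof -
    have "k \<in> \<Union>F"
      using assms(2) by (simp add: covers_def)
    then obtain A where "A \<in> F" "k \<in> A"
      by blast
    then show ?thesis
      using hereditaryD[OF assms(1)] by blast
  qed
  moreover have "{} \<in> F"
    using hereditaryD[OF assms(1) singleton[of 0]] by blast
  ultimately have "partition_of (=) \<subseteq> F"
    unfolding partition_of_def by auto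
  then show ?thesis
    using is_partition_partition_of[OF identity_equivp] by (simp add: partitions_in_def)
qed

lemma partition_norm_mono:
  assumes "\<And>k. \<bar>x k\<bar> \<le> \<bar>y k\<bar>"
  shows "partition_norm x P \<le> partition_norm y P"
  unfolding partition_norm_def
  by (intro infsum_mono ennreal_summable_on SUP_mono) (use assms in \<open>auto intro: ennreal_leI\<close>)

lemma abs_le_partition_norm:
  assumes "is_partition P"
  shows "ennreal \<bar>x k\<bar> \<le> partition_norm x P"
proof -
  obtain A where A: "A \<in> P" "k \<in> A"
    using is_partition_covers[OF assms] .
  then have "ennreal \<bar>x k\<bar> \<le> sum (\<lambda>A. SUP k\<in>A. ennreal \<bar>x k\<bar>) {A}"
    by (auto intro: SUP_upper)
  also have "\<dots> \<le> partition_norm x P"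
    unfolding partition_norm_def using A by (intro sum_le_infsum_ennreal) auto
  finally show ?thesis .
qed

lemma partition_norm_zero: "partition_norm (\<lambda>_. 0) P = 0"
proof -
  have "(SUP k\<in>A. ennreal \<bar>0\<bar>) = 0" for A :: "nat set"
    by (cases "A = {}") (auto simp: bot_ennreal)
  then show ?thesis
    by (simp add: partition_norm_def)
qed

lemma partition_norm_scale: "partition_norm (\<lambda>k. c * x k) P = ennreal \<bar>c\<bar> * partition_norm x P"
proof -
  have "(SUP k\<in>A. ennreal \<bar>c * x k\<bar>) = ennreal \<bar>c\<bar> * (SUP k\<in>A. ennreal \<bar>x k\<bar>)" for A
    unfolding SUP_mult_left_ennreal by (simp add: abs_mult ennreal_mult)
  then show ?thesis
    by (simp add: partition_norm_def infsum_cmult_ennreal)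
qed

lemma partition_norm_singletons_le:
  "partition_norm x (partition_of (=)) \<le> (\<Sum>\<^sub>\<infinity>k. ennreal \<bar>x k\<bar>)"
proof -
  let ?f = "\<lambda>A. SUP k\<in>A. ennreal \<bar>x k\<bar>"
  have "partition_norm x (partition_of (=)) \<le> infsum ?f {{}} + infsum ?f (range (\<lambda>k. {k}))"
    unfolding partition_norm_def partition_of_def
    using infsum_Un_le_ennreal[of ?f "{{}}"] by simp
  also have "infsum ?f {{}} = 0"
    by (simp add: bot_ennreal)
  also have "infsum ?f (range (\<lambda>k. {k})) = (\<Sum>\<^sub>\<infinity>k. ennreal \<bar>x k\<bar>)"
    by (simp add: infsum_reindex o_def)
  finally show ?thesis
    by simp
qed

lemma partition_norm_projn_mono:
  assumes "m \<le> n"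
  shows "partition_norm (projn m x) P \<le> partition_norm (projn n x) P"
  by (rule partition_norm_mono) (use assms in \<open>auto simp: projn_def proj_def\<close>)

lemma partition_norm_eq_SUP_projn:
  "partition_norm x P = (SUP m. partition_norm (projn m x) P)"
proof (rule antisym)
  let ?g = "\<lambda>m A. SUP k\<in>A. ennreal \<bar>projn m x k\<bar>"
  have SUP_projn: "ennreal \<bar>x k\<bar> = (SUP m. ennreal \<bar>projn m x k\<bar>)" for k
  proof (rule antisym)
    show "ennreal \<bar>x k\<bar> \<le> (SUP m. ennreal \<bar>projn m x k\<bar>)"
      by (rule SUP_upper2[of "Suc k"]) (auto simp: projn_def proj_def)
    show "(SUP m. ennreal \<bar>projn m x k\<bar>) \<le> ennreal \<bar>x k\<bar>"
      by (rule SUP_least) (auto simp: projn_def proj_def)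
  qed
  have inc: "incseq (\<lambda>m. ?g m A)" for A
    unfolding incseq_def
  proof (intro allI impI SUP_mono)
    fix m n :: nat and k assume "m \<le> n" "k \<in> A"
    then show "\<exists>k'\<in>A. ennreal \<bar>projn m x k\<bar> \<le> ennreal \<bar>projn n x k'\<bar>"
      by (intro bexI[of _ k] ennreal_leI) (auto simp: projn_def proj_def)
  qed
  show "partition_norm x P \<le> (SUP m. partition_norm (projn m x) P)"
    unfolding partition_norm_def
  proof (rule infsum_le_ennreal)
    fix G assume G: "finite G" "G \<subseteq> P"
    have "(\<Sum>A\<in>G. SUP k\<in>A. ennreal \<bar>x k\<bar>) = (SUP m. \<Sum>A\<in>G. ?g m A)"
      unfolding SUP_projn by (subst SUP_commute) (simp add: ennreal_SUP_sum inc)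
    also have "\<dots> \<le> (SUP m. infsum (?g m) P)"
      using G by (intro SUP_mono) (auto intro: sum_le_infsum_ennreal)
    finally show "(\<Sum>A\<in>G. SUP k\<in>A. ennreal \<bar>x k\<bar>) \<le> (SUP m. infsum (?g m) P)" .
  qed
qed (intro SUP_least partition_norm_mono, auto simp: projn_def proj_def)

lemma partition_norm_projn_le_if_blocks_agree:
  assumes P: "is_partition P" and Q: "is_partition Q"
    and agree: "\<And>i j. i < m \<Longrightarrow> j < m \<Longrightarrow> same_block Q i j \<longleftrightarrow> same_block P i j"
  shows "partition_norm (projn m x) Q \<le> partition_norm (projn m x) P"
proof -
  let ?g = "\<lambda>A. SUP k\<in>A. ennreal \<bar>projn m x k\<bar>"
  have "\<exists>B. B \<in> P \<and> i \<in> B" for i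
    using is_partition_covers[OF P] by blast
  then obtain blk where blk: "\<And>i. blk i \<in> P" "\<And>i. i \<in> blk i"
    by metis
  text \<open>Every block of \<open>Q\<close> meeting \<open>{..<m}\<close> is sent to the \<open>P\<close>-block of its least element;
    agreement of the relations makes this injective and the blocks dominate one another.\<close>
  define Q' where "Q' = {A\<in>Q. \<exists>i\<in>A. i < m}"
  define \<rho> where "\<rho> A = (LEAST i. i \<in> A)" for A :: "nat set"
  have \<rho>: "\<rho> A \<in> A" "\<rho> A < m" if "A \<in> Q'" for A
    using that LeastI[of "\<lambda>i. i \<in> A"] Least_le[of "\<lambda>i. i \<in> A"]
    unfolding Q'_def \<rho>_def by (auto intro: le_less_trans)
  have in_blk: "k \<in> blk (\<rho> A)" if "A \<in> Q'" "k \<in> A" "k < m" for A k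
  proof -
    have "same_block Q (\<rho> A) k"
      using that \<rho>[OF that(1)] unfolding Q'_def same_block_def by blast
    then have "same_block P (\<rho> A) k"
      using agree \<rho>[OF that(1)] that(3) by blast
    then show ?thesis
      using same_block_mem[OF P blk] by blast
  qed
  have "inj_on (blk \<circ> \<rho>) Q'"
  proof (rule inj_onI)
    fix A A' assume A: "A \<in> Q'" "A' \<in> Q'" "(blk \<circ> \<rho>) A = (blk \<circ> \<rho>) A'"
    then have "same_block P (\<rho> A) (\<rho> A')"
      using blk unfolding same_block_def by (metis comp_apply)
    then have "same_block Q (\<rho> A) (\<rho> A')"
      using agree \<rho>[OF A(1)] \<rho>[OF A(2)] by blast
    then show "A = A'"
      using A(1,2) \<rho>[OF A(1)] \<rho>[OF A(2)] same_block_mem[OF Q] is_partition_block_unique[OF Q]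
      unfolding Q'_def by blast
  qed
  have "partition_norm (projn m x) Q = infsum ?g Q'"
    unfolding partition_norm_def
    by (rule infsum_cong_neutral) (auto simp: Q'_def projn_def proj_def SUP_constant bot_ennreal)
  also have "\<dots> \<le> infsum (?g \<circ> (blk \<circ> \<rho>)) Q'"
  proof (rule infsum_mono[OF ennreal_summable_on ennreal_summable_on], unfold comp_apply, rule SUP_mono)
    fix A k assume "A \<in> Q'" "k \<in> A"
    then show "\<exists>k'\<in>blk (\<rho> A). ennreal \<bar>projn m x k\<bar> \<le> ennreal \<bar>projn m x k'\<bar>"
      using in_blk blk(2) by (cases "k < m") (auto simp: projn_def proj_def)
  qed
  also have "\<dots> = infsum ?g ((blk \<circ> \<rho>) ` Q')"
    by (rule infsum_reindex[symmetric]) fact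
  also have "\<dots> \<le> partition_norm (projn m x) P"
    unfolding partition_norm_def using blk(1)
    by (intro infsum_mono_neutral ennreal_summable_on) auto
  finally show ?thesis .
qed

section \<open>Limits of partitions\<close>

lemma equivp_eventually_limit:
  assumes r: "\<And>t. equivp (r t)" and lim: "\<And>i j. \<forall>\<^sub>F t in F. r t i j = R i j" and "F \<noteq> bot"
  shows "equivp R"
proof (rule equivpI)
  show "reflp R"
  proof (rule reflpI)
    fix i
    obtain t where "r t i i = R i i"
      using eventually_happens'[OF \<open>F \<noteq> bot\<close> lim] by blast
    then show "R i i"
      using equivp_reflp[OF r] by simp
  qed
  show "symp R"
  proof (rule sympI)
    fix i j assume "R i j"
    obtain t where "r t i j = R i j" "r t j i = R j i"
      using eventually_happens'[OF \<open>F \<noteq> bot\<close> eventually_conj[OF lim lim]] by blast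
    then show "R j i"
      using \<open>R i j\<close> equivp_symp[OF r] by metis
  qed
  show "transp R"
  proof (rule transpI)
    fix i j k assume "R i j" "R j k"
    obtain t where "r t i j = R i j" "r t j k = R j k" "r t i k = R i k"
      using eventually_happens'[OF \<open>F \<noteq> bot\<close> eventually_conj[OF lim eventually_conj[OF lim lim]]]
      by blast
    then show "R i k"
      using \<open>R i j\<close> \<open>R j k\<close> equivp_transp[OF r] by metis
  qed
qed

lemma compact_family_mem_if_initial_segments:
  assumes "compact_family F" and segments: "\<And>m. C \<inter> {..<m} \<in> F"
  shows "C \<in> F"
proof -
  have "closedin cantor_top (char_fun ` F)"
    using assms(1) compactin_imp_closedin[of cantor_top]
    by (simp add: compact_family_def cantor_top_def Hausdorff_space_product_topology)
  moreover have "limitin cantor_top (\<lambda>m. char_fun (C \<inter> {..<m})) (char_fun C) sequentially"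
    unfolding cantor_top_def limitin_componentwise
  proof (intro conjI ballI)
    fix i :: nat
    show "limitin (discrete_topology UNIV) (\<lambda>m. char_fun (C \<inter> {..<m}) i) (char_fun C i) sequentially"
      by (rule limitin_eventually) (auto simp: char_fun_def eventually_sequentially intro!: exI[of _ "Suc i"])
  qed auto
  ultimately have "char_fun C \<in> char_fun ` F"
    using segments by (intro limitin_closedin) auto
  moreover have "inj char_fun"
    by (rule injI) (simp add: char_fun_def fun_eq_iff set_eq_iff)
  ultimately show ?thesis
    by (auto dest: injD)
qed

lemma partitions_in_convergent_subseq:
  fixes P :: "nat \<Rightarrow> nat set set"
  assumes F: "compact_family F" "hereditary F" and P: "\<And>t. P t \<in> partitions_in F"
  obtains \<sigma> Q where "strict_mono \<sigma>" "Q \<in> partitions_in F"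
    "\<And>m. \<forall>\<^sub>F t in sequentially. \<forall>i<m. \<forall>j<m. same_block (P (\<sigma> t)) i j \<longleftrightarrow> same_block Q i j"
proof -
  have part: "is_partition (P t)" "P t \<subseteq> F" for t
    using P[of t] by (auto simp: partitions_in_def)
  obtain \<sigma> :: "nat \<Rightarrow> nat" where \<sigma>: "strict_mono \<sigma>"
    "\<And>ij. \<exists>b. \<forall>\<^sub>F t in sequentially. same_block (P (\<sigma> t)) (fst ij) (snd ij) = b"
    using subseq_pointwise_eventually_constant[of "\<lambda>t ij. same_block (P t) (fst ij) (snd ij)"]
    by metis
  define R where "R i j \<longleftrightarrow> (SOME b. \<forall>\<^sub>F t in sequentially. same_block (P (\<sigma> t)) i j = b)" for i j
  have lim: "\<forall>\<^sub>F t in sequentially. same_block (P (\<sigma> t)) i j = R i j" for i j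
    unfolding R_def using someI_ex[OF \<sigma>(2)[of "(i, j)"]] by simp
  have "equivp R"
    by (rule equivp_eventually_limit[OF equivp_same_block[OF part(1)] lim sequentially_bot])
  define Q where "Q = partition_of R"
  have "{} \<in> F"
    using part[of 0] by (auto simp: is_partition_def)
  moreover have "{j. R i j} \<in> F" for i
  proof (rule compact_family_mem_if_initial_segments[OF F(1)])
    fix m
    have "\<forall>\<^sub>F t in sequentially. \<forall>j\<in>{..<m}. same_block (P (\<sigma> t)) i j = R i j"
      by (intro eventually_ball_finite ballI lim) simp
    then obtain t where t: "\<forall>j\<in>{..<m}. same_block (P (\<sigma> t)) i j = R i j"
      using eventually_happens'[OF sequentially_bot] by blast
    obtain B where B: "B \<in> P (\<sigma> t)" "i \<in> B"
      using is_partition_covers[OF part(1)] .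
    then have "{j. R i j} \<inter> {..<m} \<subseteq> B"
      using t same_block_mem[OF part(1) B] by auto
    then show "{j. R i j} \<inter> {..<m} \<in> F"
      using hereditaryD[OF F(2)] part(2) B(1) by blast
  qed
  ultimately have "Q \<in> partitions_in F"
    using is_partition_partition_of[OF \<open>equivp R\<close>]
    by (auto simp: Q_def partitions_in_def partition_of_def)
  moreover have "\<forall>\<^sub>F t in sequentially. \<forall>i<m. \<forall>j<m. same_block (P (\<sigma> t)) i j \<longleftrightarrow> same_block Q i j" for m
  proof -
    have "\<forall>\<^sub>F t in sequentially. \<forall>i\<in>{..<m}. \<forall>j\<in>{..<m}. same_block (P (\<sigma> t)) i j = R i j"
      by (intro eventually_ball_finite ballI lim) simp_all
    then show ?thesis
      by (simp add: Q_def same_block_partition_of[OF \<open>equivp R\<close>] Ball_def)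
  qed
  ultimately show thesis
    using that \<sigma>(1) by blast
qed

section \<open>The norm \<open>\<parallel>\<cdot>\<parallel>\<^sup>\<F>\<close>\<close>

definition splice :: "nat set \<Rightarrow> nat set set \<Rightarrow> nat set set \<Rightarrow> nat set set" where
  "splice S P Q = (\<lambda>A. A \<inter> S) ` P \<union> (\<lambda>B. B - S) ` Q"

lemma splice_in_partitions_in:
  assumes "hereditary F" "P \<in> partitions_in F" "Q \<in> partitions_in F"
  shows "splice S P Q \<in> partitions_in F"
proof -
  have P: "is_partition P" "P \<subseteq> F" and Q: "is_partition Q" "Q \<subseteq> F"
    using assms(2,3) by (auto simp: partitions_in_def)
  have "{} \<in> P"
    using P(1) by (simp add: is_partition_def)
  then have "{} \<in> splice S P Q"
    unfolding splice_def by force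
  moreover have "\<Union> (splice S P Q) = UNIV"
  proof (intro set_eqI iffI)
    fix k :: nat
    obtain A B where "A \<in> P" "k \<in> A" "B \<in> Q" "k \<in> B"
      using is_partition_covers[OF P(1)] is_partition_covers[OF Q(1)] by metis
    then show "k \<in> \<Union> (splice S P Q)"
      unfolding splice_def by (cases "k \<in> S") auto
  qed simp
  moreover have "C \<inter> D = {}" if "C \<in> splice S P Q" "D \<in> splice S P Q" "C \<noteq> D" for C D
    using that unfolding splice_def
  proof (elim UnE imageE)
    fix A A' assume "A \<in> P" "A' \<in> P" "C = A \<inter> S" "D = A' \<inter> S"
    then show ?thesis
      using \<open>C \<noteq> D\<close> is_partition_disjoint[OF P(1)] by blast
  next
    fix B B' assume "B \<in> Q" "B' \<in> Q" "C = B - S" "D = B' - S"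
    then show ?thesis
      using \<open>C \<noteq> D\<close> is_partition_disjoint[OF Q(1)] by blast
  qed auto
  moreover have "splice S P Q \<subseteq> F"
  proof
    fix C assume "C \<in> splice S P Q"
    then obtain A where "A \<in> F" "C \<subseteq> A"
      using P(2) Q(2) unfolding splice_def by blast
    then show "C \<in> F"
      by (rule hereditaryD[OF assms(1)])
  qed
  ultimately show ?thesis
    unfolding partitions_in_def is_partition_def by blast
qed

lemma partition_norm_add_splice_le:
  "partition_norm (\<lambda>k. x k + y k) (splice {k. \<bar>y k\<bar> \<le> \<bar>x k\<bar>} P Q)
     \<le> 2 * partition_norm x P + 2 * partition_norm y Q"
proof -
  let ?S = "{k. \<bar>y k\<bar> \<le> \<bar>x k\<bar>}"
  let ?f = "\<lambda>A. SUP k\<in>A. ennreal \<bar>x k + y k\<bar>"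
  have dominated: "?f B \<le> 2 * (SUP k\<in>A. ennreal \<bar>z k\<bar>)"
    if "B \<subseteq> A" "\<And>k. k \<in> B \<Longrightarrow> \<bar>x k + y k\<bar> \<le> 2 * \<bar>z k\<bar>" for A B and z :: "nat \<Rightarrow> real"
    unfolding SUP_mult_left_ennreal
  proof (rule SUP_mono)
    fix k assume "k \<in> B"
    then have "ennreal \<bar>x k + y k\<bar> \<le> 2 * ennreal \<bar>z k\<bar>"
      using that(2) ennreal_leI by (fastforce simp: ennreal_mult)
    then show "\<exists>k'\<in>A. ennreal \<bar>x k + y k\<bar> \<le> 2 * ennreal \<bar>z k'\<bar>"
      using \<open>k \<in> B\<close> that(1) by blast
  qed
  have "partition_norm (\<lambda>k. x k + y k) (splice ?S P Q)
      \<le> infsum (?f \<circ> (\<lambda>A. A \<inter> ?S)) P + infsum (?f \<circ> (\<lambda>B. B - ?S)) Q"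
    unfolding partition_norm_def splice_def
    by (rule order_trans[OF infsum_Un_le_ennreal add_mono[OF infsum_image_le_ennreal infsum_image_le_ennreal]])
  also have "\<dots> \<le> infsum (\<lambda>A. 2 * (SUP k\<in>A. ennreal \<bar>x k\<bar>)) P + infsum (\<lambda>A. 2 * (SUP k\<in>A. ennreal \<bar>y k\<bar>)) Q"
    by (intro add_mono infsum_mono ennreal_summable_on) (auto intro!: dominated)
  also have "\<dots> = 2 * partition_norm x P + 2 * partition_norm y Q"
    by (simp add: partition_norm_def infsum_cmult_ennreal)
  finally show ?thesis .
qed

lemma Fnorm_mono:
  assumes "\<And>k. \<bar>x k\<bar> \<le> \<bar>y k\<bar>"
  shows "Fnorm F x \<le> Fnorm F y"
  unfolding Fnorm_eq_INF_partition_norm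
  by (intro INF_mono' partition_norm_mono assms)

lemma abs_le_Fnorm: "ennreal \<bar>x k\<bar> \<le> Fnorm F x"
  unfolding Fnorm_eq_INF_partition_norm
  by (rule INF_greatest) (auto simp: partitions_in_def intro: abs_le_partition_norm)

lemma Fnorm_eq_0_iff:
  assumes "hereditary F" "covers F"
  shows "Fnorm F x = 0 \<longleftrightarrow> x = (\<lambda>_. 0)"
proof
  assume "Fnorm F x = 0"
  then show "x = (\<lambda>_. 0)"
    using abs_le_Fnorm[of x _ F] by (auto simp: fun_eq_iff)
next
  assume "x = (\<lambda>_. 0)"
  then show "Fnorm F x = 0"
    using singletons_in_partitions_in[OF assms]
    by (auto simp: Fnorm_eq_INF_partition_norm partition_norm_zero INF_constant)
qed

lemma Fnorm_scale:
  assumes "hereditary F" "covers F"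
  shows "Fnorm F (\<lambda>k. c * x k) = ennreal \<bar>c\<bar> * Fnorm F x"
  unfolding Fnorm_eq_INF_partition_norm partition_norm_scale
  by (rule mult_INF_ennreal[symmetric]) (use singletons_in_partitions_in[OF assms] in auto)

lemma Fnorm_add_le:
  assumes "hereditary F" "covers F"
  shows "Fnorm F (\<lambda>k. x k + y k) \<le> 2 * (Fnorm F x + Fnorm F y)"
proof -
  have ne: "partitions_in F \<noteq> {}"
    using singletons_in_partitions_in[OF assms] by blast
  have "Fnorm F (\<lambda>k. x k + y k)
      \<le> (INF P\<in>partitions_in F. 2 * partition_norm x P) + (INF Q\<in>partitions_in F. 2 * partition_norm y Q)"
  proof (rule le_INF_add_ennreal[OF _ ne ne])
    fix P Q assume "P \<in> partitions_in F" "Q \<in> partitions_in F"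
    then have "splice {k. \<bar>y k\<bar> \<le> \<bar>x k\<bar>} P Q \<in> partitions_in F"
      by (rule splice_in_partitions_in[OF assms(1)])
    then show "Fnorm F (\<lambda>k. x k + y k) \<le> 2 * partition_norm x P + 2 * partition_norm y Q"
      unfolding Fnorm_eq_INF_partition_norm
      by (rule INF_lower2) (rule partition_norm_add_splice_le)
  qed
  also have "\<dots> = 2 * (Fnorm F x + Fnorm F y)"
    unfolding Fnorm_eq_INF_partition_norm distrib_left
    by (simp add: mult_INF_ennreal[OF _ ne])
  finally show ?thesis .
qed

lemma Fnorm_less_top_if_finite_support:
  assumes "hereditary F" "covers F" "finite {k. x k \<noteq> 0}"
  shows "Fnorm F x < \<infinity>"
proof -
  have "Fnorm F x \<le> partition_norm x (partition_of (=))"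
    unfolding Fnorm_eq_INF_partition_norm using singletons_in_partitions_in[OF assms(1,2)]
    by (rule INF_lower)
  also have "\<dots> \<le> (\<Sum>\<^sub>\<infinity>k. ennreal \<bar>x k\<bar>)"
    by (rule partition_norm_singletons_le)
  also have "\<dots> = (\<Sum>k\<in>{k. x k \<noteq> 0}. ennreal \<bar>x k\<bar>)"
    using assms(3) by (subst infsum_cong_neutral[where T = "{k. x k \<noteq> 0}"]) auto
  also have "\<dots> < \<infinity>"
    by (simp add: less_top[symmetric] ennreal_sum_eq_top)
  finally show ?thesis .
qed

lemma Fnorm_le_SUP_projn:
  assumes "compact_family F" "hereditary F"
  shows "Fnorm F x \<le> (SUP n. Fnorm F (projn n x))"
proof (rule dense_ge)
  fix M assume M: "(SUP n. Fnorm F (projn n x)) < M"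
  have "\<exists>P\<in>partitions_in F. partition_norm (projn n x) P < M" for n
    using le_less_trans[OF SUP_upper[OF UNIV_I] M]
    by (simp add: Fnorm_eq_INF_partition_norm INF_less_iff)
  then obtain P where P: "\<And>n. P n \<in> partitions_in F" "\<And>n. partition_norm (projn n x) (P n) < M"
    by metis
  obtain \<sigma> :: "nat \<Rightarrow> nat" and Q where \<sigma>: "strict_mono \<sigma>" and Q: "Q \<in> partitions_in F"
    and agree: "\<And>m. \<forall>\<^sub>F t in sequentially. \<forall>i<m. \<forall>j<m. same_block (P (\<sigma> t)) i j \<longleftrightarrow> same_block Q i j"
    by (rule partitions_in_convergent_subseq[where P = P, OF assms P(1)]) blast
  have "partition_norm (projn m x) Q \<le> M" for m
  proof -
    obtain t where "m \<le> t" and t: "\<forall>i<m. \<forall>j<m. same_block (P (\<sigma> t)) i j \<longleftrightarrow> same_block Q i j"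
      using eventually_happens'[OF sequentially_bot eventually_conj[OF eventually_ge_at_top agree]]
      by blast
    have "partition_norm (projn m x) Q \<le> partition_norm (projn m x) (P (\<sigma> t))"
      using P(1) Q t by (intro partition_norm_projn_le_if_blocks_agree) (auto simp: partitions_in_def)
    also have "\<dots> \<le> partition_norm (projn (\<sigma> t) x) (P (\<sigma> t))"
      using \<open>m \<le> t\<close> seq_suble[OF \<sigma>] by (intro partition_norm_projn_mono) (meson order_trans)
    also have "\<dots> \<le> M"
      using P(2) by (rule less_imp_le)
    finally show ?thesis .
  qed
  then have "partition_norm x Q \<le> M"
    unfolding partition_norm_eq_SUP_projn[of x] by (rule SUP_least)
  then show "Fnorm F x \<le> M"
    unfolding Fnorm_eq_INF_partition_norm by (rule INF_lower2[OF Q])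
qed

lemma Fnorm_projn_tendsto:
  assumes "compact_family F" "hereditary F"
  shows "(\<lambda>n. Fnorm F (projn n x)) \<longlonglongrightarrow> Fnorm F x"
proof -
  have "incseq (\<lambda>n. Fnorm F (projn n x))"
    unfolding incseq_def by (intro allI impI Fnorm_mono) (auto simp: projn_def proj_def)
  moreover have "(SUP n. Fnorm F (projn n x)) = Fnorm F x"
    by (intro antisym SUP_least Fnorm_mono Fnorm_le_SUP_projn assms) (auto simp: projn_def proj_def)
  ultimately show ?thesis
    using LIMSEQ_SUP by metis
qed

theorem mainTheorem2:
  fixes \<F> :: "nat set set"
  assumes "compact_family \<F>" and "hereditary \<F>" and "covers \<F>"
  shows "nice (Fnorm \<F>) \<and> ext_quasi_norm (Fnorm \<F>) \<and>
         (\<forall>x. (\<lambda>n. Fnorm \<F> (projn n x)) \<longlonglongrightarrow> Fnorm \<F> x)"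
proof -
  have lim: "\<forall>x. (\<lambda>n. Fnorm \<F> (projn n x)) \<longlonglongrightarrow> Fnorm \<F> x"
    using Fnorm_projn_tendsto[OF assms(1,2)] by blast
  have "nice (Fnorm \<F>)"
    unfolding nice_def using Fnorm_less_top_if_finite_support[OF assms(2,3)] Fnorm_mono lim by blast
  moreover have "ext_quasi_norm (Fnorm \<F>)"
    unfolding ext_quasi_norm_def
    using Fnorm_eq_0_iff[OF assms(2,3)] Fnorm_scale[OF assms(2,3)] Fnorm_add_le[OF assms(2,3)]
    by (intro conjI allI exI[of _ 2]) auto
  ultimately show ?thesis
    using lim by blast
qed

end
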